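(* The $\mathcal{C}$-submodules $\mathcal{C} \langle A \rangle$ and $\widehat{\mathfrak{H}^{0}}$ of $\mathfrak{H}$ are closed under the shuffle product $\mathrm{sh}_{\hbar}$. For any $u_{1}, \ldots , u_{r}, v_{1}, \ldots , v_{s} \in \mathfrak{z}$ and $M \ge 1$, \[ Z_{q, M}(u_{1} \cdots u_{r} \,\mathrm{sh}_{\hbar}\, v_{1} \cdots v_{s})= \sum_{\substack{0<m_{1}<\cdots <m_{r} \\ 0<n_{1}<\cdots <n_{s} \\ m_{r}+n_{s}<M}} \prod_{i=1}^{r}F_{q}(m_{i}; u_{i})\prod_{j=1}^{s}F_{q}(n_{j}; v_{j}) \] (with $m_r$, resp. $n_s$, read as $0$ if $r=0$, resp. $s=0$). Consequently $Z_{q}(w \,\mathrm{sh}_{\hbar}\, w')=Z_{q}(w)Z_{q}(w')$ for any $w, w' \in \widehat{\mathfrak{H}^{0}}$.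
   Context: Let $\mathcal{C}=\mathbb{Q}[\hbar]$ ($\hbar$ formal), $\mathfrak{H}=\mathcal{C}\langle a,b\rangle$ the non-commutative polynomial ring. For $k\ge1$ put $g_k=ba^k$. Let $A=\{\hbar b\}\cup\{ba^k\mid k\ge1\}$, $\mathcal{C}\langle A\rangle$ the $\mathcal{C}$-subalgebra of $\mathfrak H$ generated by $1$ and $A$, $\mathfrak z$ the $\mathcal C$-span of $A$, $\widehat{\mathfrak H^0}=\mathcal C+\sum_{k\ge1}\mathcal C\langle A\rangle g_k$. Fix $q\in\mathbb{C}$, $0<|q|<1$; $\mathbb{C}$ is a $\mathcal{C}$-module with $\hbar$ acting by $1-q$; $[m]=(1-q^m)/(1-q)$; for $m\ge1$, $F_q(m;\cdot):\mathfrak{z}\to\mathbb{C}$ is $\mathcal{C}$-linear with $F_q(m;\hbar b)=1-q$, $F_q(m;g_k)=q^{km}/[m]^k$. For $M\ge1$, $Z_{q,M}:\mathcal C\langle A\rangle\to\mathbb C$ is the $\mathcal{C}$-linear map with $Z_{q,M}(1)=1$ and $Z_{q,M}(u_1\cdots u_r)=\sum_{0<m_1<\cdots<m_r<M}\prod_i F_q(m_i;u_i)$ for $u_i\in A$ (hence by multilinearity also for $u_i\in\mathfrak z$); $Z_q(w)=\lim_{M\to\infty}Z_{q,M}(w)$ for $w\in\widehat{\mathfrak H^0}$ (the limit exists). The shuffle product $\mathrm{sh}_\hbar$ on $\mathfrak H$ (written infix) is the $\mathcal C$-bilinear product determined by $w\,\mathrm{sh}_\hbar\,1=1\,\mathrm{sh}_\hbar\,w=w$,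 $wa\,\mathrm{sh}_\hbar\,w'a=(wa\,\mathrm{sh}_\hbar\,w'+w\,\mathrm{sh}_\hbar\,w'a+\hbar(w\,\mathrm{sh}_\hbar\,w'))a$, $wb\,\mathrm{sh}_\hbar\,w'=w\,\mathrm{sh}_\hbar\,w'b=(w\,\mathrm{sh}_\hbar\,w')b$ for all $w,w'\in\mathfrak H$. *)

theory Defs
  imports Complex_Main "HOL-Library.Poly_Mapping" "HOL-Computational_Algebra.Polynomial"
begin

datatype letter = La | Lb

type_synonym word = "letter list"
type_synonym H = "word \<Rightarrow>\<^sub>0 rat poly"

definition hbar :: "rat poly" where "hbar = [:0, 1:]"

definition scal :: "rat poly \<Rightarrow> H \<Rightarrow> H" where
  "scal c f = Poly_Mapping.map (\<lambda>x. c * x) f"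

definition mapkeys :: "(word \<Rightarrow> word) \<Rightarrow> H \<Rightarrow> H" where
  "mapkeys g f = (\<Sum>v\<in>Poly_Mapping.keys f. Poly_Mapping.single (g v) (Poly_Mapping.lookup f v))"

definition oneH :: H where "oneH = Poly_Mapping.single [] 1"

definition cat :: "H \<Rightarrow> H \<Rightarrow> H" where
  "cat f g = (\<Sum>v\<in>Poly_Mapping.keys f. \<Sum>v'\<in>Poly_Mapping.keys g. Poly_Mapping.single (v @ v') (Poly_Mapping.lookup f v * Poly_Mapping.lookup g v'))"

definition prodH :: "H list \<Rightarrow> H" where
  "prodH us = foldr cat us oneH"

text \<open>Shuffle product on words, computed on reversed words (head = last letter).\<close>
fun shr :: "word \<Rightarrow> word \<Rightarrow> H" where
  "shr [] y = Poly_Mapping.single y 1"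
| "shr x [] = Poly_Mapping.single x 1"
| "shr (Lb # x) y = mapkeys (Cons Lb) (shr x y)"
| "shr (La # x) (Lb # y) = mapkeys (Cons Lb) (shr (La # x) y)"
| "shr (La # x) (La # y) =
     mapkeys (Cons La) (shr (La # x) y + shr x (La # y) + scal hbar (shr x y))"

definition shw :: "word \<Rightarrow> word \<Rightarrow> H" where
  "shw v v' = mapkeys rev (shr (rev v) (rev v'))"

definition sh :: "H \<Rightarrow> H \<Rightarrow> H" where
  "sh f g = (\<Sum>v\<in>Poly_Mapping.keys f. \<Sum>v'\<in>Poly_Mapping.keys g. scal (Poly_Mapping.lookup f v * Poly_Mapping.lookup g v') (shw v v'))"

definition gen :: "nat \<Rightarrow> H" where
  "gen k = Poly_Mapping.single (Lb # replicate k La) 1"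

definition hb :: H where "hb = Poly_Mapping.single [Lb] hbar"

definition Aset :: "H set" where
  "Aset = {hb} \<union> {gen k | k. k \<ge> 1}"

inductive_set zspace :: "H set" where
  z_zero: "0 \<in> zspace"
| z_step: "a \<in> Aset \<Longrightarrow> f \<in> zspace \<Longrightarrow> scal c a + f \<in> zspace"

inductive_set CA :: "H set" where
  CA_one: "oneH \<in> CA"
| CA_gen: "a \<in> Aset \<Longrightarrow> a \<in> CA"
| CA_add: "f \<in> CA \<Longrightarrow> g \<in> CA \<Longrightarrow> f + g \<in> CA"
| CA_scal: "f \<in> CA \<Longrightarrow> scal c f \<in> CA"
| CA_mult: "f \<in> CA \<Longrightarrow> g \<in> CA \<Longrightarrow> cat f g \<in> CA"

inductive_set H0hat :: "H set" where
  H0_const: "scal c oneH \<in> H0hat"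
| H0_gk: "f \<in> CA \<Longrightarrow> k \<ge> 1 \<Longrightarrow> cat f (gen k) \<in> H0hat"
| H0_add: "f \<in> H0hat \<Longrightarrow> g \<in> H0hat \<Longrightarrow> f + g \<in> H0hat"

definition evC :: "complex \<Rightarrow> rat poly \<Rightarrow> complex" where
  "evC q c = poly (map_poly of_rat c) (1 - q)"

definition qint :: "complex \<Rightarrow> nat \<Rightarrow> complex" where
  "qint q m = (1 - q ^ m) / (1 - q)"

text \<open>Value attached to the block b a^k at index m. For k >= 1 this is F_q(m; g_k);
  for k = 0 (the word b) it is 1, so that hb = hbar * b gets the value (1 - q).\<close>
definition G :: "complex \<Rightarrow> nat \<Rightarrow> nat \<Rightarrow> complex" where
  "G q m k = (if k = 0 then 1 else q ^ (k * m) / (qint q m) ^ k)"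

text \<open>Decomposition of a word as b a^k1 ... b a^kr.\<close>
function blocks :: "word \<Rightarrow> nat list option" where
  "blocks [] = Some []"
| "blocks (La # w) = None"
| "blocks (Lb # w) = map_option (Cons (length (takeWhile (\<lambda>c. c = La) w)))
                        (blocks (dropWhile (\<lambda>c. c = La) w))"
  by pat_completeness auto
termination
  by (relation "measure length") (auto simp: le_imp_less_Suc length_dropWhile_le)

definition Fw :: "complex \<Rightarrow> nat \<Rightarrow> word \<Rightarrow> complex" where
  "Fw q m w = (case blocks w of Some [k] \<Rightarrow> G q m k | _ \<Rightarrow> 0)"

text \<open>F_q(m; -) extended C-linearly (agrees with the paper on z).\<close>
definition F :: "complex \<Rightarrow> nat \<Rightarrow> H \<Rightarrow> complex" where
  "F q m f = (\<Sum>w\<in>Poly_Mapping.keys f. evC q (Poly_Mapping.lookup f w) * Fw q m w)"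

definition incseqs :: "nat \<Rightarrow> nat \<Rightarrow> nat list set" where
  "incseqs r M = {ms. length ms = r \<and> sorted_wrt (<) ms \<and> set ms \<subseteq> {0<..<M}}"

definition Zw :: "complex \<Rightarrow> nat \<Rightarrow> word \<Rightarrow> complex" where
  "Zw q M w = (case blocks w of None \<Rightarrow> 0
     | Some ks \<Rightarrow> (\<Sum>ms\<in>incseqs (length ks) M. \<Prod>i<length ks. G q (ms ! i) (ks ! i)))"

text \<open>Z_{q,M}, extended C-linearly (agrees with the paper on C<A>).\<close>
definition Z :: "complex \<Rightarrow> nat \<Rightarrow> H \<Rightarrow> complex" where
  "Z q M f = (\<Sum>w\<in>Poly_Mapping.keys f. evC q (Poly_Mapping.lookup f w) * Zw q M w)"

definition Zq :: "complex \<Rightarrow> H \<Rightarrow> complex" where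
  "Zq q f = lim (\<lambda>M. Z q M f)"

definition lastz :: "nat list \<Rightarrow> nat" where
  "lastz xs = (if xs = [] then 0 else last xs)"

end

theory Submission
  imports Defs
begin

text \<open>
  Read words backwards and let them act on sequences \<open>\<nat> \<rightarrow> \<complex>\<close>: the letter \<open>b\<close> acts as strict
  partial summation and \<open>a\<close> as multiplication by \<open>\<phi>(m) = q\<^sup>m / [m]\<close>. Applied to the delta
  sequence at \<open>0\<close>, the reversed word \<open>w\<close> gives a sequence \<open>\<Phi>\<^sub>w\<close> whose partial sums below \<open>M\<close>
  are \<open>Z\<^sub>q\<^sub>,\<^sub>M(w)\<close>; for \<open>u\<^sub>1 \<cdots> u\<^sub>r\<close> with \<open>u\<^sub>i \<in> \<zz>\<close>, \<open>\<Phi>(m)\<close> is the sum of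
  \<open>\<Prod> F\<^sub>q(m\<^sub>i; u\<^sub>i)\<close> over \<open>0 < m\<^sub>1 < \<dots> < m\<^sub>r = m\<close>. Partial summation commutes with Cauchy
  convolution, and the identity \<open>\<phi>(m) \<phi>(n) = \<phi>(m + n) (\<phi>(m) + \<phi>(n) + 1 - q)\<close> reproduces the
  recursion of \<open>sh\<^sub>\<hbar>\<close> for two trailing letters \<open>a\<close>. Hence \<open>\<Phi>\<close> turns \<open>sh\<^sub>\<hbar>\<close> into convolution,
  which gives the formula for \<open>Z\<^sub>q\<^sub>,\<^sub>M\<close>. Words in \<open>\<HH>\<^sup>0\<close> end in \<open>a\<close>, so their sequences decay
  geometrically, and the Cauchy product theorem gives the multiplicativity of \<open>Z\<^sub>q\<close>.

  Closure: \<open>\<C>\<langle>A\<rangle>\<close> consists of the combinations of words \<open>b a\<^bsup>k\<^sub>1\<^esup> \<cdots> b a\<^bsup>k\<^sub>r\<^esup>\<close> whose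
  coefficients are divisible by \<open>\<hbar>\<close> to the number of zero exponents \<open>k\<^sub>i\<close>, and every zero block
  created by \<open>sh\<^sub>\<hbar>\<close> comes with a factor \<open>\<hbar>\<close>.
\<close>

abbreviation lookup :: "('a \<Rightarrow>\<^sub>0 'b::zero) \<Rightarrow> 'a \<Rightarrow> 'b" where
  "lookup \<equiv> Poly_Mapping.lookup"

abbreviation keys :: "('a \<Rightarrow>\<^sub>0 'b::zero) \<Rightarrow> 'a set" where
  "keys \<equiv> Poly_Mapping.keys"

lemma lookup_scal [simp]: "lookup (scal c f) w = c * lookup f w"
  by (simp add: scal_def Poly_Mapping.map.rep_eq when_def)

lemma scal_0_left [simp]: "scal 0 f = 0"
  by (rule poly_mapping_eqI) simp

lemma keys_scal: "keys (scal c f) \<subseteq> keys f"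
  by (auto simp: in_keys_iff)

lemma scal_scal: "scal c (scal d f) = scal (c * d) f"
  by (rule poly_mapping_eqI) (simp add: mult.assoc)

lemma lookup_single_if: "lookup (Poly_Mapping.single k v) k' = (if k = k' then v else 0)"
  by (simp add: lookup_single when_def)

lemma scal_single: "scal c (Poly_Mapping.single v a) = Poly_Mapping.single v (c * a)"
  by (rule poly_mapping_eqI) (simp add: lookup_single_if)

lemma cat_single:
  "cat (Poly_Mapping.single v a) (Poly_Mapping.single v' b) = Poly_Mapping.single (v @ v') (a * b)"
  by (simp add: cat_def)

lemma sum_single_lookup: "(\<Sum>w\<in>keys h. Poly_Mapping.single w (lookup h w)) = h"
  by (rule poly_mapping_eqI) (simp add: lookup_sum lookup_single_if in_keys_iff)

lemma lookup_mapkeys: "lookup (mapkeys g f) u = (\<Sum>v\<in>keys f. if g v = u then lookup f v else 0)"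
  by (simp add: mapkeys_def lookup_sum lookup_single_if)

lemma lookup_mapkeys_inj:
  assumes "inj g"
  shows "lookup (mapkeys g f) (g v) = lookup f v"
proof -
  have "lookup (mapkeys g f) (g v) = (\<Sum>v'\<in>keys f. if v' = v then lookup f v' else 0)"
    unfolding lookup_mapkeys using assms by (intro sum.cong) (auto dest: injD)
  also have "\<dots> = lookup f v"
    by (cases "v \<in> keys f") (auto simp: in_keys_iff)
  finally show ?thesis .
qed

lemma lookup_mapkeys_notin_range:
  "u \<notin> range g \<Longrightarrow> lookup (mapkeys g f) u = 0"
  unfolding lookup_mapkeys by (intro sum.neutral) auto

lemma lookup_mapkeys_Cons:
  "lookup (mapkeys (Cons c) f) u = (case u of [] \<Rightarrow> 0 | d # w \<Rightarrow> if d = c then lookup f w else 0)"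
proof (cases u)
  case Nil
  then show ?thesis
    using lookup_mapkeys_notin_range[of "[]" "Cons c" f] by auto
next
  case (Cons d w)
  then show ?thesis
    using lookup_mapkeys_notin_range[of u "Cons c" f] by (auto simp: lookup_mapkeys_inj)
qed

lemma lookup_mapkeys_Cons_nonzeroD:
  "lookup (mapkeys (Cons c) h) u \<noteq> 0 \<Longrightarrow> \<exists>w. u = c # w \<and> lookup h w \<noteq> 0"
  by (auto simp: lookup_mapkeys_Cons split: list.splits if_splits)

lemma lookup_mapkeys_rev: "lookup (mapkeys rev f) u = lookup f (rev u)"
  using lookup_mapkeys_inj[of rev f "rev u"] by (simp add: inj_on_def)

lemma lookup_cat:
  "lookup (cat f g) w =
     (\<Sum>v\<in>keys f. \<Sum>v'\<in>keys g. if v @ v' = w then lookup f v * lookup g v' else 0)"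
  by (simp add: cat_def lookup_sum lookup_single_if)

lemma lookup_sh:
  "lookup (sh f g) w = (\<Sum>v\<in>keys f. \<Sum>v'\<in>keys g. lookup f v * lookup g v' * lookup (shw v v') w)"
  by (simp add: sh_def lookup_sum)

lemma lookup_shw: "lookup (shw v v') w = lookup (shr (rev v) (rev v')) (rev w)"
  by (simp add: shw_def lookup_mapkeys_rev)

lemma map_poly_of_rat_add:
  "map_poly (of_rat :: rat \<Rightarrow> 'a::field_char_0) (a + b) = map_poly of_rat a + map_poly of_rat b"
  by (rule poly_eqI) (simp add: coeff_map_poly of_rat_add)

lemma map_poly_of_rat_mult:
  "map_poly (of_rat :: rat \<Rightarrow> 'a::field_char_0) (a * b) = map_poly of_rat a * map_poly of_rat b"
  by (rule poly_eqI) (simp add: coeff_map_poly coeff_mult of_rat_mult of_rat_sum)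

lemma evC_add [simp]: "evC q (a + b) = evC q a + evC q b"
  by (simp add: evC_def map_poly_of_rat_add)

lemma evC_mult [simp]: "evC q (a * b) = evC q a * evC q b"
  by (simp add: evC_def map_poly_of_rat_mult)

lemma evC_0 [simp]: "evC q 0 = 0"
  by (simp add: evC_def)

lemma evC_1 [simp]: "evC q 1 = 1"
  by (simp add: evC_def)

lemma evC_hbar [simp]: "evC q hbar = 1 - q"
  by (simp add: evC_def hbar_def map_poly_pCons)

definition lin_ext :: "complex \<Rightarrow> (word \<Rightarrow> complex) \<Rightarrow> H \<Rightarrow> complex" where
  "lin_ext q e h = (\<Sum>w\<in>keys h. evC q (lookup h w) * e w)"

lemma Z_eq_lin_ext: "Z q M h = lin_ext q (Zw q M) h"
  by (simp add: Z_def lin_ext_def)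

lemma F_eq_lin_ext: "F q m h = lin_ext q (Fw q m) h"
  by (simp add: F_def lin_ext_def)

lemma lin_ext_superset:
  assumes "finite S" "keys h \<subseteq> S"
  shows "lin_ext q e h = (\<Sum>w\<in>S. evC q (lookup h w) * e w)"
  unfolding lin_ext_def using assms by (intro sum.mono_neutral_left) (auto simp: in_keys_iff)

lemma lin_ext_add: "lin_ext q e (f + g) = lin_ext q e f + lin_ext q e g"
proof -
  let ?S = "keys f \<union> keys g"
  have "lin_ext q e (f + g) = (\<Sum>w\<in>?S. evC q (lookup (f + g) w) * e w)"
    by (rule lin_ext_superset) (auto dest: set_mp[OF keys_add])
  also have "\<dots> = (\<Sum>w\<in>?S. evC q (lookup f w) * e w) + (\<Sum>w\<in>?S. evC q (lookup g w) * e w)"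
    by (simp add: lookup_add algebra_simps sum.distrib)
  also have "\<dots> = lin_ext q e f + lin_ext q e g"
    by (subst (1 2) lin_ext_superset[of ?S]) auto
  finally show ?thesis .
qed

lemma lin_ext_zero [simp]: "lin_ext q e 0 = 0"
  by (simp add: lin_ext_def)

lemma lin_ext_single [simp]: "lin_ext q e (Poly_Mapping.single w c) = evC q c * e w"
  by (simp add: lin_ext_def)

lemma lin_ext_sum: "lin_ext q e (\<Sum>i\<in>I. f i) = (\<Sum>i\<in>I. lin_ext q e (f i))"
  by (induction I rule: infinite_finite_induct) (auto simp: lin_ext_add)

lemma lin_ext_scal: "lin_ext q e (scal c f) = evC q c * lin_ext q e f"
proof -
  have "lin_ext q e (scal c f) = (\<Sum>w\<in>keys f. evC q (lookup (scal c f) w) * e w)"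
    by (rule lin_ext_superset) (auto simp: keys_scal[THEN subsetD])
  then show ?thesis
    by (simp add: lin_ext_def sum_distrib_left algebra_simps)
qed

lemma lin_ext_cong: "(\<And>w. w \<in> keys h \<Longrightarrow> e w = e' w) \<Longrightarrow> lin_ext q e h = lin_ext q e' h"
  by (simp add: lin_ext_def)

lemma lin_ext_mapkeys: "lin_ext q e (mapkeys g f) = lin_ext q (\<lambda>w. e (g w)) f"
  unfolding mapkeys_def lin_ext_sum lin_ext_single by (simp add: lin_ext_def)

lemma lin_ext_cat:
  "lin_ext q e (cat f g) =
     (\<Sum>v\<in>keys f. \<Sum>v'\<in>keys g. evC q (lookup f v) * evC q (lookup g v') * e (v @ v'))"
  unfolding cat_def lin_ext_sum by simp

lemma lin_ext_sh:
  "lin_ext q e (sh f g) =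
     (\<Sum>v\<in>keys f. \<Sum>v'\<in>keys g. evC q (lookup f v) * evC q (lookup g v') * lin_ext q e (shw v v'))"
  unfolding sh_def lin_ext_sum by (simp add: lin_ext_scal)

lemma lin_ext_sum_fun: "lin_ext q (\<lambda>w. \<Sum>i\<in>I. e i w) h = (\<Sum>i\<in>I. lin_ext q (e i) h)"
  unfolding lin_ext_def by (simp add: sum_distrib_left sum.swap[of _ I])

lemma lin_ext_mult_fun: "lin_ext q (\<lambda>w. c * e w) h = c * lin_ext q e h"
  unfolding lin_ext_def by (simp add: sum_distrib_left algebra_simps)

definition blockword :: "nat list \<Rightarrow> word" where
  "blockword ks = concat (map (\<lambda>k. Lb # replicate k La) ks)"

lemma blockword_Nil [simp]: "blockword [] = []"
  by (simp add: blockword_def)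

lemma blockword_Cons: "blockword (k # ks) = Lb # replicate k La @ blockword ks"
  by (simp add: blockword_def)

lemma blockword_append: "blockword (ks @ ks') = blockword ks @ blockword ks'"
  by (simp add: blockword_def)

lemma blockword_snoc: "blockword (ks @ [k]) = blockword ks @ Lb # replicate k La"
  by (simp add: blockword_def)

lemma blockword_single: "blockword [k] = Lb # replicate k La"
  by (simp add: blockword_def)

lemma takeWhile_La_blockword: "takeWhile (\<lambda>c. c = La) (blockword ks) = []"
  by (cases ks) (auto simp: blockword_Cons)

lemma dropWhile_La_blockword: "dropWhile (\<lambda>c. c = La) (blockword ks) = blockword ks"
  by (cases ks) (auto simp: blockword_Cons)

lemma blocks_blockword [simp]: "blocks (blockword ks) = Some ks"
proof (induction ks)
  case (Cons k ks)
  have "takeWhile (\<lambda>c. c = La) (replicate k La @ blockword ks) = replicate k La"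
    by (subst takeWhile_append2) (auto simp: takeWhile_La_blockword)
  moreover have "dropWhile (\<lambda>c. c = La) (replicate k La @ blockword ks) = blockword ks"
    by (subst dropWhile_append2) (auto simp: dropWhile_La_blockword)
  ultimately show ?case
    by (simp add: blockword_Cons Cons.IH)
qed simp

lemma blockword_inj: "blockword ks = blockword ks' \<Longrightarrow> ks = ks'"
  by (metis blocks_blockword option.inject)

lemma blocks_eq_SomeD: "blocks w = Some ks \<Longrightarrow> w = blockword ks"
proof (induction w arbitrary: ks rule: blocks.induct)
  case (3 w)
  let ?t = "takeWhile (\<lambda>c. c = La) w"
  obtain ks' where ks': "blocks (dropWhile (\<lambda>c. c = La) w) = Some ks'" "ks = length ?t # ks'"
    using "3.prems" by auto
  have "?t = replicate (length ?t) La"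
    by (metis (mono_tags, lifting) replicate_length_same set_takeWhileD)
  then have "w = replicate (length ?t) La @ dropWhile (\<lambda>c. c = La) w"
    by (metis takeWhile_dropWhile_id)
  then show ?case
    using "3.IH"[OF ks'(1)] ks'(2) by (simp add: blockword_Cons)
qed simp_all

lemma blocks_eq_None_iff: "blocks w = None \<longleftrightarrow> w \<noteq> [] \<and> hd w = La"
proof (induction w rule: blocks.induct)
  case (3 w)
  then show ?case
    using hd_dropWhile[of "\<lambda>c. c = La" w] by auto
qed simp_all

lemma ex_blockword_iff: "(\<exists>ks. w = blockword ks) \<longleftrightarrow> w = [] \<or> hd w = Lb"
proof -
  have "(\<exists>ks. w = blockword ks) \<longleftrightarrow> blocks w \<noteq> None"
    using blocks_eq_SomeD by fastforce
  then show ?thesis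
    by (cases "hd w") (auto simp: blocks_eq_None_iff)
qed

definition rev_block :: "word \<Rightarrow> bool" where
  "rev_block x \<longleftrightarrow> x = [] \<or> last x = Lb"

lemma rev_block_iff: "rev_block x \<longleftrightarrow> (\<exists>ks. rev x = blockword ks)"
  unfolding rev_block_def ex_blockword_iff by (cases x rule: rev_cases) auto

lemma rev_block_Nil [simp]: "rev_block []"
  by (simp add: rev_block_def)

lemma rev_block_Lb [simp]: "rev_block (Lb # x) \<longleftrightarrow> rev_block x"
  by (simp add: rev_block_def)

lemma rev_block_La [simp]: "rev_block (La # x) \<longleftrightarrow> x \<noteq> [] \<and> rev_block x"
  by (simp add: rev_block_def)

section \<open>The submodules \<open>\<C>\<langle>A\<rangle>\<close> and \<open>\<HH>\<^sup>0\<close>\<close>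

text \<open>
  \<open>\<hbar> b\<close> is the only generator in \<open>A\<close> with a zero block, so \<open>\<C>\<langle>A\<rangle>\<close> is spanned by these monomials.
\<close>

definition CA_monomial :: "nat list \<Rightarrow> H" where
  "CA_monomial ks = Poly_Mapping.single (blockword ks) (hbar ^ count_list ks 0)"

definition CA_char :: "H \<Rightarrow> bool" where
  "CA_char h \<longleftrightarrow> (\<forall>w. lookup h w \<noteq> 0 \<longrightarrow> (\<exists>ks. w = blockword ks))
     \<and> (\<forall>ks. hbar ^ count_list ks 0 dvd lookup h (blockword ks))"

lemma CA_monomial_Nil: "CA_monomial [] = oneH"
  by (simp add: CA_monomial_def oneH_def)

lemma CA_monomial_append: "CA_monomial (ks @ ks') = cat (CA_monomial ks) (CA_monomial ks')"
  by (simp add: CA_monomial_def cat_single blockword_append power_add)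

lemma Aset_eq_range: "Aset = range (\<lambda>k. CA_monomial [k])"
proof -
  have "CA_monomial [k] = (if k = 0 then hb else gen k)" for k
    by (simp add: CA_monomial_def hb_def gen_def blockword_single)
  then have "range (\<lambda>k. CA_monomial [k]) = range (\<lambda>k. if k = 0 then hb else gen k)"
    by presburger
  also have "\<dots> = Aset"
  proof (intro equalityI subsetI)
    fix x
    assume "x \<in> Aset"
    then consider "x = hb" | k where "x = gen k" "k \<ge> 1"
      unfolding Aset_def by blast
    then show "x \<in> range (\<lambda>k. if k = 0 then hb else gen k)"
    proof cases
      case 1
      then show ?thesis
        by (intro image_eqI[where x = 0]) simp_all
    next
      case (2 k)
      then show ?thesis
        by (intro image_eqI[where x = k]) simp_all
    qed
  qed (auto simp: Aset_def)
  finally show ?thesis ..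
qed

lemma CA_char_add: "CA_char f \<Longrightarrow> CA_char g \<Longrightarrow> CA_char (f + g)"
  unfolding CA_char_def by (auto simp: lookup_add) (metis add.right_neutral)

lemma CA_char_scal: "CA_char f \<Longrightarrow> CA_char (scal c f)"
  unfolding CA_char_def by auto

lemma CA_char_CA_monomial: "CA_char (CA_monomial ks)"
  unfolding CA_char_def CA_monomial_def by (auto simp: lookup_single_if dest: blockword_inj)

lemma CA_char_coeff:
  assumes "CA_char h" "w \<in> keys h"
  obtains ks c where "w = blockword ks" "lookup h w = hbar ^ count_list ks 0 * c"
  using assms unfolding CA_char_def in_keys_iff by (metis dvdE)

lemma CA_char_cat:
  assumes f: "CA_char f" and g: "CA_char g"
  shows "CA_char (cat f g)"
  unfolding CA_char_def
proof (intro conjI allI impI)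
  fix w
  assume "lookup (cat f g) w \<noteq> 0"
  then obtain v v' where vv: "v @ v' = w" "lookup f v \<noteq> 0" "lookup g v' \<noteq> 0"
    unfolding lookup_cat by (auto elim!: sum.not_neutral_contains_not_neutral split: if_splits)
  then obtain ks1 ks2 where "v = blockword ks1" "v' = blockword ks2"
    using f g unfolding CA_char_def by blast
  then show "\<exists>ks. w = blockword ks"
    using vv by (auto simp flip: blockword_append)
next
  fix ks
  show "hbar ^ count_list ks 0 dvd lookup (cat f g) (blockword ks)"
    unfolding lookup_cat
  proof (intro dvd_sum)
    fix v v'
    show "hbar ^ count_list ks 0 dvd
        (if v @ v' = blockword ks then lookup f v * lookup g v' else 0)"
    proof (cases "v @ v' = blockword ks \<and> lookup f v \<noteq> 0 \<and> lookup g v' \<noteq> 0")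
      case True
      then obtain ks1 a ks2 b where
        "v = blockword ks1" "lookup f v = hbar ^ count_list ks1 0 * a"
        "v' = blockword ks2" "lookup g v' = hbar ^ count_list ks2 0 * b"
        using f g by (metis CA_char_coeff in_keys_iff)
      moreover from this have "ks = ks1 @ ks2"
        using True by (auto simp flip: blockword_append dest: blockword_inj)
      ultimately show ?thesis
        using True by (simp add: power_add mult_ac)
    qed auto
  qed
qed

lemma CA_imp_CA_char: "h \<in> CA \<Longrightarrow> CA_char h"
proof (induction rule: CA.induct)
  case CA_one
  then show ?case
    using CA_char_CA_monomial[of "[]"] by (simp add: CA_monomial_Nil)
qed (auto simp: Aset_eq_range CA_char_CA_monomial intro: CA_char_add CA_char_scal CA_char_cat)

lemma CA_zero: "0 \<in> CA"
  using CA_scal[OF CA_one, of 0] by simp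

lemma CA_sum: "(\<And>i. i \<in> I \<Longrightarrow> f i \<in> CA) \<Longrightarrow> (\<Sum>i\<in>I. f i) \<in> CA"
  by (induction I rule: infinite_finite_induct) (auto simp: CA_zero intro: CA_add)

lemma CA_monomial_in_CA: "CA_monomial ks \<in> CA"
proof (induction ks)
  case Nil
  then show ?case
    using CA_one by (simp add: CA_monomial_Nil)
next
  case (Cons k ks)
  have "CA_monomial [k] \<in> CA"
    by (rule CA_gen) (simp add: Aset_eq_range)
  from CA_mult[OF this Cons.IH] show ?case
    by (simp flip: CA_monomial_append)
qed

lemma CA_char_imp_CA:
  assumes h: "CA_char h"
  shows "h \<in> CA"
proof -
  have "Poly_Mapping.single w (lookup h w) \<in> CA" if "w \<in> keys h" for w
  proof -
    obtain ks c where "w = blockword ks" "lookup h w = hbar ^ count_list ks 0 * c"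
      using h \<open>w \<in> keys h\<close> by (rule CA_char_coeff)
    then have "Poly_Mapping.single w (lookup h w) = scal c (CA_monomial ks)"
      by (simp add: CA_monomial_def scal_single mult.commute)
    then show ?thesis
      using CA_scal[OF CA_monomial_in_CA] by simp
  qed
  then have "(\<Sum>w\<in>keys h. Poly_Mapping.single w (lookup h w)) \<in> CA"
    by (rule CA_sum)
  then show ?thesis
    by (simp add: sum_single_lookup)
qed

lemma CA_iff_CA_char: "h \<in> CA \<longleftrightarrow> CA_char h"
  using CA_imp_CA_char CA_char_imp_CA by blast

lemma CA_keys_blockword: "h \<in> CA \<Longrightarrow> v \<in> keys h \<Longrightarrow> \<exists>ks. v = blockword ks"
  by (auto simp: CA_iff_CA_char CA_char_def in_keys_iff)

lemma zspace_subset_CA: "u \<in> zspace \<Longrightarrow> u \<in> CA"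
  by (induction rule: zspace.induct) (auto intro: CA_add CA_scal CA_gen simp: CA_zero)

lemma prodH_Nil: "prodH [] = oneH"
  by (simp add: prodH_def)

lemma prodH_Cons: "prodH (u # us) = cat u (prodH us)"
  by (simp add: prodH_def)

lemma prodH_in_CA: "set us \<subseteq> zspace \<Longrightarrow> prodH us \<in> CA"
  by (induction us) (auto simp: prodH_Nil prodH_Cons intro: CA_one CA_mult zspace_subset_CA)

definition H0hat_char :: "H \<Rightarrow> bool" where
  "H0hat_char h \<longleftrightarrow> h \<in> CA \<and> (\<forall>w. lookup h w \<noteq> 0 \<longrightarrow> w = [] \<or> last w = La)"

lemma H0hat_imp_H0hat_char: "h \<in> H0hat \<Longrightarrow> H0hat_char h"
proof (induction rule: H0hat.induct)
  case (H0_const c)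
  have "scal c oneH \<in> CA"
    by (intro CA_scal CA_one)
  then show ?case
    by (auto simp: H0hat_char_def oneH_def lookup_single_if split: if_splits)
next
  case (H0_gk f k)
  have "gen k \<in> CA"
    using H0_gk(2) by (intro CA_gen) (auto simp: Aset_def)
  then have "cat f (gen k) \<in> CA"
    using H0_gk(1) by (intro CA_mult)
  moreover have "last w = La" if "lookup (cat f (gen k)) w \<noteq> 0" for w
  proof -
    from that obtain v where "v @ Lb # replicate k La = w"
      by (auto simp: lookup_cat gen_def split: if_splits
          elim!: sum.not_neutral_contains_not_neutral)
    with H0_gk(2) show ?thesis
      by auto
  qed
  ultimately show ?case
    by (simp add: H0hat_char_def)
next
  case (H0_add f g)
  then show ?case
    by (auto simp: H0hat_char_def lookup_add intro: CA_add) (metis add.right_neutral)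
qed

lemma H0hat_zero: "0 \<in> H0hat"
  using H0_const[of 0] by simp

lemma H0hat_sum: "(\<And>i. i \<in> I \<Longrightarrow> f i \<in> H0hat) \<Longrightarrow> (\<Sum>i\<in>I. f i) \<in> H0hat"
  by (induction I rule: infinite_finite_induct) (auto simp: H0hat_zero intro: H0_add)

lemma single_in_H0hat:
  assumes h: "H0hat_char h" and w: "w \<in> keys h"
  shows "Poly_Mapping.single w (lookup h w) \<in> H0hat"
proof (cases "w = []")
  case True
  then show ?thesis
    using H0_const[of "lookup h w"] by (simp add: oneH_def scal_single)
next
  case False
  have "CA_char h"
    using h by (simp add: H0hat_char_def CA_iff_CA_char)
  then obtain ks c where ks: "w = blockword ks" and c: "lookup h w = hbar ^ count_list ks 0 * c"
    using w by (rule CA_char_coeff)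
  with False obtain ks0 k where kk: "ks = ks0 @ [k]"
    by (cases ks rule: rev_cases) auto
  have "last w = La"
    using h w False unfolding H0hat_char_def by (auto simp: in_keys_iff)
  then have k: "k \<ge> 1"
    using ks kk by (cases k) (auto simp: blockword_snoc)
  have "Poly_Mapping.single w (lookup h w) = cat (scal c (CA_monomial ks0)) (gen k)"
    using k unfolding c
    by (simp add: CA_monomial_def scal_single gen_def cat_single ks kk blockword_snoc mult.commute)
  then show ?thesis
    using H0_gk[OF CA_scal[OF CA_monomial_in_CA] k] by simp
qed

lemma H0hat_iff_H0hat_char: "h \<in> H0hat \<longleftrightarrow> H0hat_char h"
proof
  assume "H0hat_char h"
  then have "(\<Sum>w\<in>keys h. Poly_Mapping.single w (lookup h w)) \<in> H0hat"
    by (intro H0hat_sum single_in_H0hat)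
  then show "h \<in> H0hat"
    by (simp add: sum_single_lookup)
qed (rule H0hat_imp_H0hat_char)

lemma H0hat_subset_CA: "h \<in> H0hat \<Longrightarrow> h \<in> CA"
  by (simp add: H0hat_iff_H0hat_char H0hat_char_def)

lemma H0hat_keys_last: "h \<in> H0hat \<Longrightarrow> w \<in> keys h \<Longrightarrow> w = [] \<or> last w = La"
  by (auto simp: H0hat_iff_H0hat_char H0hat_char_def in_keys_iff)

section \<open>Closure under the shuffle product\<close>

definition starts_b :: "word \<Rightarrow> bool" where
  "starts_b x \<longleftrightarrow> x \<noteq> [] \<and> hd x = Lb"

fun rev_zero_blocks :: "word \<Rightarrow> nat" where
  "rev_zero_blocks [] = 0"
| "rev_zero_blocks (Lb # x) = Suc (rev_zero_blocks x)"
| "rev_zero_blocks [La] = 0"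
| "rev_zero_blocks (La # La # x) = rev_zero_blocks (La # x)"
| "rev_zero_blocks (La # Lb # x) = rev_zero_blocks x"

lemma rev_zero_blocks_rev_blockword: "rev_zero_blocks (rev (blockword ks)) = count_list ks 0"
proof (induction ks rule: rev_induct)
  case (snoc k ks)
  have "rev_zero_blocks (replicate (Suc j) La @ Lb # y) = rev_zero_blocks y" for j y
    by (induction j) auto
  with snoc show ?case
    by (cases k) (simp_all add: blockword_snoc replicate_append_same flip: replicate_Suc)
qed simp

lemma rev_zero_blocks_La:
  "rev_zero_blocks (La # w) + (if starts_b w then 1 else 0) = rev_zero_blocks w"
  by (cases w rule: rev_zero_blocks.cases) (auto simp: starts_b_def)

lemma shr_nonzero_starts_b:
  "starts_b x \<or> starts_b y \<Longrightarrow> lookup (shr x y) u \<noteq> 0 \<Longrightarrow> starts_b u"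
proof (induction x y rule: shr.induct)
  case (3 x v va)
  then show ?case
    by (auto simp: starts_b_def dest!: lookup_mapkeys_Cons_nonzeroD)
next
  case (4 x y)
  then show ?case
    by (auto simp: starts_b_def dest!: lookup_mapkeys_Cons_nonzeroD)
qed (auto simp: lookup_single_if starts_b_def split: if_splits)

lemma shr_nonzero_Nil:
  "lookup (shr x y) [] \<noteq> 0 \<Longrightarrow> x = [] \<and> y = []"
  by (induction x y rule: shr.induct)
    (auto simp: lookup_single_if lookup_mapkeys_Cons split: if_splits)

lemma shr_nonzero_starts_La:
  "x = [] \<or> hd x = La \<Longrightarrow> y = [] \<or> hd y = La \<Longrightarrow> lookup (shr x y) u \<noteq> 0 \<Longrightarrow> u = [] \<or> hd u = La"
proof (induction x y rule: shr.induct)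
  case (5 x y)
  then show ?case
    by (auto dest!: lookup_mapkeys_Cons_nonzeroD)
qed (auto simp: lookup_single_if split: if_splits)

lemma shr_nonzero_rev_block:
  "rev_block x \<Longrightarrow> rev_block y \<Longrightarrow> lookup (shr x y) u \<noteq> 0 \<Longrightarrow> rev_block u"
proof (induction x y arbitrary: u rule: shr.induct)
  case (3 x v va)
  then show ?case
    by (auto dest!: lookup_mapkeys_Cons_nonzeroD)
next
  case (4 x y)
  then show ?case
    by (auto dest!: lookup_mapkeys_Cons_nonzeroD)
next
  case (5 x y)
  from "5.prems"(3) obtain w where w: "u = La # w"
    and nz: "lookup (shr (La # x) y + shr x (La # y) + scal hbar (shr x y)) w \<noteq> 0"
    by (auto dest!: lookup_mapkeys_Cons_nonzeroD)
  have xy: "rev_block x" "rev_block y" "x \<noteq> []"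
    using "5.prems"(1,2) by auto
  from nz consider "lookup (shr (La # x) y) w \<noteq> 0" | "lookup (shr x (La # y)) w \<noteq> 0"
    | "lookup (shr x y) w \<noteq> 0"
    by (fastforce simp: lookup_add)
  then have "rev_block w \<and> w \<noteq> []"
  proof cases
    case 1
    then show ?thesis
      using "5.IH"(1)[OF "5.prems"(1) xy(2)] shr_nonzero_Nil by blast
  next
    case 2
    then show ?thesis
      using "5.IH"(2)[OF xy(1) "5.prems"(2)] shr_nonzero_Nil by blast
  next
    case 3
    then show ?thesis
      using "5.IH"(3)[OF xy(1,2)] shr_nonzero_Nil xy(3) by blast
  qed
  with w show ?case
    by simp
qed (auto simp: lookup_single_if split: if_splits)

lemma power_dvd_power_mult_shift:
  fixes p :: "'a::idom"
  assumes "p \<noteq> 0" "p ^ a dvd p ^ b * c" "a' + b \<le> a + b'"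
  shows "p ^ a' dvd p ^ b' * c"
proof -
  have "p ^ (a' + b) dvd p ^ (a + b')"
    using assms(3) by (simp add: le_imp_power_dvd)
  also have "p ^ (a + b') dvd p ^ b * (p ^ b' * c)"
    using mult_dvd_mono[OF assms(2) dvd_refl[of "p ^ b'"]] by (simp add: power_add algebra_simps)
  finally have "p ^ b * p ^ a' dvd p ^ b * (p ^ b' * c)"
    by (simp add: power_add mult.commute)
  then show ?thesis
    using assms(1) by simp
qed

lemma hbar_nonzero: "hbar \<noteq> 0"
  by (simp add: hbar_def)

lemma hbar_power_dvd_mapkeys_Lb:
  assumes "\<And>w. hbar ^ rev_zero_blocks w dvd hbar ^ n * lookup h w"
  shows "hbar ^ rev_zero_blocks u dvd hbar ^ Suc n * lookup (mapkeys (Cons Lb) h) u"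
proof (cases "\<exists>w. u = Lb # w")
  case True
  then obtain w where "u = Lb # w"
    by blast
  then show ?thesis
    using power_dvd_power_mult_shift[OF hbar_nonzero assms[of w]] by (simp add: lookup_mapkeys_Cons)
next
  case False
  then have "lookup (mapkeys (Cons Lb) h) u = 0"
    by (auto simp: lookup_mapkeys_Cons split: list.split)
  then show ?thesis
    by simp
qed

text \<open>
  Every zero block of a word in the support of \<open>shr x y\<close> either comes from \<open>x\<close> or \<open>y\<close>, or
  was created by the third term of the \<open>a\<close>-\<open>a\<close> rule, which carries a factor \<open>\<hbar>\<close>.
\<close>

lemma hbar_power_dvd_shr:
  "hbar ^ rev_zero_blocks u dvd hbar ^ (rev_zero_blocks x + rev_zero_blocks y) * lookup (shr x y) u"
proof (induction x y arbitrary: u rule: shr.induct)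
  case (3 x v va)
  show ?case
    using hbar_power_dvd_mapkeys_Lb[OF "3.IH"] by simp
next
  case (4 x y)
  show ?case
    using hbar_power_dvd_mapkeys_Lb[OF "4.IH"] by simp
next
  case (5 x y)
  show ?case
  proof (cases "\<exists>w. u = La # w")
    case True
    then obtain w where u: "u = La # w"
      by blast
    define B where "B = rev_zero_blocks (La # x) + rev_zero_blocks (La # y)"
    let ?s = "\<lambda>w. if starts_b w then 1 else 0 :: nat"
    note z = rev_zero_blocks_La[of w] rev_zero_blocks_La[of x] rev_zero_blocks_La[of y]
    have t1: "hbar ^ rev_zero_blocks (La # w) dvd hbar ^ B * lookup (shr (La # x) y) w"
    proof (cases "lookup (shr (La # x) y) w = 0")
      case False
      then have "?s y \<le> ?s w"
        using shr_nonzero_starts_b[of "La # x" y w] by auto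
      then show ?thesis
        using z B_def by (intro power_dvd_power_mult_shift[OF hbar_nonzero "5.IH"(1)]) auto
    qed simp
    have t2: "hbar ^ rev_zero_blocks (La # w) dvd hbar ^ B * lookup (shr x (La # y)) w"
    proof (cases "lookup (shr x (La # y)) w = 0")
      case False
      then have "?s x \<le> ?s w"
        using shr_nonzero_starts_b[of x "La # y" w] by auto
      then show ?thesis
        using z B_def by (intro power_dvd_power_mult_shift[OF hbar_nonzero "5.IH"(2)]) auto
    qed simp
    have t3: "hbar ^ rev_zero_blocks (La # w) dvd hbar ^ B * (hbar * lookup (shr x y) w)"
    proof (cases "lookup (shr x y) w = 0")
      case False
      then have "?s x + ?s y \<le> Suc (?s w)"
        using shr_nonzero_starts_b[of x y w] by auto
      then have "hbar ^ rev_zero_blocks (La # w) dvd hbar ^ Suc B * lookup (shr x y) w"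
        using z B_def by (intro power_dvd_power_mult_shift[OF hbar_nonzero "5.IH"(3)]) auto
      then show ?thesis
        by (simp add: mult_ac)
    qed simp
    have "lookup (shr (La # x) (La # y)) u
        = lookup (shr (La # x) y) w + lookup (shr x (La # y)) w + hbar * lookup (shr x y) w"
      by (simp add: u lookup_mapkeys_Cons lookup_add)
    with t1 t2 t3 show ?thesis
      by (simp add: u B_def distrib_left dvd_add)
  next
    case False
    then have "lookup (shr (La # x) (La # y)) u = 0"
      by (auto simp: lookup_mapkeys_Cons split: list.split)
    then show ?thesis
      by simp
  qed
qed (auto simp: lookup_single_if)

lemma CA_char_shw_blockword:
  "CA_char (scal (hbar ^ count_list (ks1 @ ks2) 0) (shw (blockword ks1) (blockword ks2)))"
  (is "CA_char ?h")
  unfolding CA_char_def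
proof (intro conjI allI impI)
  fix w
  assume "lookup ?h w \<noteq> 0"
  then have "lookup (shr (rev (blockword ks1)) (rev (blockword ks2))) (rev w) \<noteq> 0"
    by (simp add: lookup_shw)
  then have "rev_block (rev w)"
    by (rule shr_nonzero_rev_block[rotated 2]) (auto simp: rev_block_iff)
  then show "\<exists>ks. w = blockword ks"
    by (simp add: rev_block_iff)
next
  fix ks
  show "hbar ^ count_list ks 0 dvd lookup ?h (blockword ks)"
    using hbar_power_dvd_shr[of "rev (blockword ks)" "rev (blockword ks1)" "rev (blockword ks2)"]
    by (simp add: lookup_shw rev_zero_blocks_rev_blockword)
qed

lemma sh_in_CA:
  assumes f: "f \<in> CA" and g: "g \<in> CA"
  shows "sh f g \<in> CA"
proof -
  have cf: "CA_char f" and cg: "CA_char g"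
    using f g by (simp_all add: CA_iff_CA_char)
  have "scal (lookup f v * lookup g v') (shw v v') \<in> CA"
    if kf: "v \<in> keys f" and kg: "v' \<in> keys g" for v v'
  proof -
    obtain ks1 a where v: "v = blockword ks1" "lookup f v = hbar ^ count_list ks1 0 * a"
      using cf kf by (rule CA_char_coeff)
    obtain ks2 b where v': "v' = blockword ks2" "lookup g v' = hbar ^ count_list ks2 0 * b"
      using cg kg by (rule CA_char_coeff)
    have "scal (lookup f v * lookup g v') (shw v v')
        = scal (a * b)
            (scal (hbar ^ count_list (ks1 @ ks2) 0) (shw (blockword ks1) (blockword ks2)))"
      unfolding v(2) v'(2) by (simp only: v(1) v'(1) scal_scal count_list_append power_add mult_ac)
    then show ?thesis
      using CA_scal[OF CA_char_imp_CA[OF CA_char_shw_blockword]] by simp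
  qed
  then show ?thesis
    unfolding sh_def by (intro CA_sum) simp
qed

lemma sh_in_H0hat:
  assumes f: "f \<in> H0hat" and g: "g \<in> H0hat"
  shows "sh f g \<in> H0hat"
proof -
  have "w = [] \<or> last w = La" if nz: "lookup (sh f g) w \<noteq> 0" for w
  proof -
    obtain v v' where vv: "v \<in> keys f" "v' \<in> keys g" "lookup (shw v v') w \<noteq> 0"
      using nz unfolding lookup_sh by (auto elim!: sum.not_neutral_contains_not_neutral)
    then have "v = [] \<or> last v = La" "v' = [] \<or> last v' = La"
      using f g H0hat_keys_last by blast+
    then have "rev v = [] \<or> hd (rev v) = La" "rev v' = [] \<or> hd (rev v') = La"
      by (auto simp: hd_rev)
    moreover have "lookup (shr (rev v) (rev v')) (rev w) \<noteq> 0"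
      using vv by (simp add: lookup_shw)
    ultimately have "rev w = [] \<or> hd (rev w) = La"
      by (rule shr_nonzero_starts_La)
    then show ?thesis
      by (auto simp: hd_rev)
  qed
  moreover have "sh f g \<in> CA"
    using f g by (intro sh_in_CA H0hat_subset_CA)
  ultimately show ?thesis
    by (simp add: H0hat_iff_H0hat_char H0hat_char_def)
qed

section \<open>Words acting on sequences\<close>

definition qphi :: "complex \<Rightarrow> nat \<Rightarrow> complex" where
  "qphi q m = q ^ m / qint q m"

definition delta0 :: "nat \<Rightarrow> complex" where
  "delta0 m = (if m = 0 then 1 else 0)"

text \<open>Words act in reversed form: \<open>word_seq q (rev w)\<close> is the sequence \<open>\<Phi>\<^sub>w\<close>.\<close>

fun apply_word :: "complex \<Rightarrow> (nat \<Rightarrow> complex) \<Rightarrow> word \<Rightarrow> nat \<Rightarrow> complex" where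
  "apply_word q g [] m = g m"
| "apply_word q g (Lb # x) m = (\<Sum>m'<m. apply_word q g x m')"
| "apply_word q g (La # x) m = qphi q m * apply_word q g x m"

abbreviation word_seq :: "complex \<Rightarrow> word \<Rightarrow> nat \<Rightarrow> complex" where
  "word_seq q \<equiv> apply_word q delta0"

lemma qphi_0 [simp]: "qphi q 0 = 0"
  by (simp add: qphi_def qint_def)

lemma G_eq_qphi_power: "G q m k = qphi q m ^ k"
proof (cases "k = 0")
  case False
  have "q ^ (k * m) = (q ^ m) ^ k"
    by (metis power_mult mult.commute)
  with False show ?thesis
    by (simp add: G_def qphi_def power_divide)
qed (simp add: G_def)

lemma apply_word_La_fun: "apply_word q g (La # x) = (\<lambda>m. qphi q m * apply_word q g x m)"
  by (simp add: fun_eq_iff)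

lemma apply_word_append: "apply_word q g (x @ y) = apply_word q (apply_word q g y) x"
proof (induction x)
  case (Cons c x)
  then show ?case
    by (cases c) (simp_all add: fun_eq_iff)
qed (simp add: fun_eq_iff)

lemma apply_word_linear:
  "apply_word q (\<lambda>k. \<Sum>i\<in>I. c i * h i k) x m = (\<Sum>i\<in>I. c i * apply_word q (h i) x m)"
proof (induction x arbitrary: m)
  case (Cons a x)
  then show ?case
    by (cases a) (simp_all add: sum_distrib_left sum.swap[of _ "{..<m}"] algebra_simps)
qed simp

lemma apply_word_zero: "apply_word q (\<lambda>_. 0) x m = 0"
proof (induction x arbitrary: m)
  case (Cons a x)
  then show ?case
    by (cases a) auto
qed simp

lemma apply_word_at_0: "x \<noteq> [] \<Longrightarrow> apply_word q g x 0 = 0"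
proof (cases x)
  case (Cons a x')
  then show ?thesis
    by (cases a) auto
qed simp

lemma word_seq_snoc_La: "word_seq q (y @ [La]) m = 0"
proof -
  have "word_seq q [La] = (\<lambda>_. 0)"
    by (auto simp: fun_eq_iff delta0_def)
  then show ?thesis
    by (simp add: apply_word_append apply_word_zero)
qed

lemma apply_word_replicate_La:
  "apply_word q g (replicate k La @ y) m = qphi q m ^ k * apply_word q g y m"
  by (induction k) auto

definition seqs_ending :: "nat \<Rightarrow> nat \<Rightarrow> nat list set" where
  "seqs_ending r m = {ms. length ms = r \<and> sorted_wrt (<) ms \<and> (\<forall>x\<in>set ms. 0 < x) \<and> lastz ms = m}"

definition ending_sum :: "(nat \<Rightarrow> nat \<Rightarrow> complex) \<Rightarrow> nat \<Rightarrow> nat \<Rightarrow> complex" where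
  "ending_sum c r m = (\<Sum>ms\<in>seqs_ending r m. \<Prod>i<r. c i (ms ! i))"

lemma sorted_wrt_less_le_last: "sorted_wrt (<) (ms :: nat list) \<Longrightarrow> x \<in> set ms \<Longrightarrow> x \<le> last ms"
  by (induction ms rule: rev_induct) (auto simp: sorted_wrt_append less_imp_le)

lemma seqs_ending_le: "ms \<in> seqs_ending r m \<Longrightarrow> x \<in> set ms \<Longrightarrow> x \<le> m"
  unfolding seqs_ending_def lastz_def using sorted_wrt_less_le_last by (auto split: if_splits)

lemma finite_seqs_ending: "finite (seqs_ending r m)"
proof -
  have "seqs_ending r m \<subseteq> {ms. set ms \<subseteq> {..m} \<and> length ms = r}"
    using seqs_ending_le by (auto simp: seqs_ending_def)
  then show ?thesis
    by (rule finite_subset) (simp add: finite_lists_length_eq)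
qed

lemma seqs_ending_0: "seqs_ending 0 m = (if m = 0 then {[]} else {})"
  by (auto simp: seqs_ending_def lastz_def)

lemma seqs_ending_Suc: "seqs_ending (Suc r) m = (\<lambda>ms. ms @ [m]) ` (\<Union>m'<m. seqs_ending r m')"
proof (intro equalityI subsetI)
  fix ms
  assume ms: "ms \<in> seqs_ending (Suc r) m"
  then obtain ms0 where ms0: "ms = ms0 @ [m]"
    by (cases ms rule: rev_cases) (auto simp: seqs_ending_def lastz_def)
  with ms have "ms0 \<in> seqs_ending r (lastz ms0)" "lastz ms0 < m"
    by (auto simp: seqs_ending_def sorted_wrt_append lastz_def)
  with ms0 show "ms \<in> (\<lambda>ms. ms @ [m]) ` (\<Union>m'<m. seqs_ending r m')"
    by auto
next
  fix ms
  assume "ms \<in> (\<lambda>ms. ms @ [m]) ` (\<Union>m'<m. seqs_ending r m')"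
  then obtain ms0 m' where ms0: "ms = ms0 @ [m]" "ms0 \<in> seqs_ending r m'" "m' < m"
    by auto
  then have "\<forall>x\<in>set ms0. x < m"
    using seqs_ending_le by fastforce
  with ms0 show "ms \<in> seqs_ending (Suc r) m"
    by (auto simp: seqs_ending_def sorted_wrt_append lastz_def)
qed

lemma sum_UN_seqs_ending:
  "(\<Sum>ms\<in>(\<Union>m'<m. seqs_ending r m'). f ms) = (\<Sum>m'<m. \<Sum>ms\<in>seqs_ending r m'. f ms)"
  by (rule sum.UNION_disjoint) (simp, simp add: finite_seqs_ending, auto simp: seqs_ending_def)

lemma ending_sum_0: "ending_sum c 0 m = delta0 m"
  by (simp add: ending_sum_def seqs_ending_0 delta0_def)

lemma ending_sum_cong: "(\<And>i m. i < r \<Longrightarrow> c i m = c' i m) \<Longrightarrow> ending_sum c r m = ending_sum c' r m"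
  unfolding ending_sum_def by (intro sum.cong refl prod.cong) auto

lemma ending_sum_Suc: "ending_sum c (Suc r) m = c r m * (\<Sum>m'<m. ending_sum c r m')"
proof -
  have "ending_sum c (Suc r) m = (\<Sum>ms\<in>(\<Union>m'<m. seqs_ending r m'). \<Prod>i<Suc r. c i ((ms @ [m]) ! i))"
    unfolding ending_sum_def seqs_ending_Suc by (subst sum.reindex) (auto simp: inj_on_def)
  also have "\<dots> = (\<Sum>ms\<in>(\<Union>m'<m. seqs_ending r m'). c r m * (\<Prod>i<r. c i (ms ! i)))"
  proof (intro sum.cong refl)
    fix ms
    assume "ms \<in> (\<Union>m'<m. seqs_ending r m')"
    then have "length ms = r"
      by (auto simp: seqs_ending_def)
    then show "(\<Prod>i<Suc r. c i ((ms @ [m]) ! i)) = c r m * (\<Prod>i<r. c i (ms ! i))"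
      by (simp add: nth_append mult.commute)
  qed
  also have "\<dots> = c r m * (\<Sum>m'<m. ending_sum c r m')"
    by (simp add: sum_UN_seqs_ending ending_sum_def sum_distrib_left)
  finally show ?thesis .
qed

lemma ending_sum_snoc:
  "ending_sum (\<lambda>i. c ((xs @ [x]) ! i)) (Suc (length xs)) m
     = c x m * (\<Sum>m'<m. ending_sum (\<lambda>i. c (xs ! i)) (length xs) m')"
  unfolding ending_sum_Suc by (auto simp: nth_append intro!: sum.cong ending_sum_cong)

lemma incseqs_eq_UN_seqs_ending: "1 \<le> M \<Longrightarrow> incseqs r M = (\<Union>m<M. seqs_ending r m)"
proof (intro equalityI subsetI)
  fix ms
  assume M: "1 \<le> M" and ms: "ms \<in> incseqs r M"
  have "lastz ms < M"
  proof (cases "ms = []")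
    case False
    then have "last ms \<in> {0<..<M}"
      using ms last_in_set[OF False] unfolding incseqs_def by blast
    with False show ?thesis
      by (simp add: lastz_def)
  qed (use M in \<open>simp add: lastz_def\<close>)
  with ms show "ms \<in> (\<Union>m<M. seqs_ending r m)"
    by (auto simp: incseqs_def seqs_ending_def)
next
  fix ms
  assume "ms \<in> (\<Union>m<M. seqs_ending r m)"
  then obtain m where "m < M" "ms \<in> seqs_ending r m"
    by auto
  then show "ms \<in> incseqs r M"
    using seqs_ending_le by (fastforce simp: incseqs_def seqs_ending_def)
qed

lemma word_seq_rev_blockword:
  "word_seq q (rev (blockword ks)) m = ending_sum (\<lambda>i m. G q m (ks ! i)) (length ks) m"
proof (induction ks arbitrary: m rule: rev_induct)
  case (snoc k ks)
  have "word_seq q (rev (blockword (ks @ [k]))) m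
      = G q m k * (\<Sum>m'<m. word_seq q (rev (blockword ks)) m')"
    by (simp add: blockword_snoc apply_word_replicate_La G_eq_qphi_power)
  then show ?case
    using ending_sum_snoc[of "\<lambda>k m. G q m k" ks k m] by (simp add: snoc.IH)
qed (simp add: ending_sum_0)

lemma Zw_eq_sum_word_seq:
  assumes "1 \<le> M"
  shows "Zw q M w = (\<Sum>m<M. word_seq q (rev w) m)"
proof (cases "blocks w")
  case None
  then obtain w' where "w = La # w'"
    by (cases w) (auto simp: blocks_eq_None_iff)
  with None show ?thesis
    by (simp add: Zw_def word_seq_snoc_La)
next
  case (Some ks)
  then have "Zw q M w = (\<Sum>m<M. ending_sum (\<lambda>i m. G q m (ks ! i)) (length ks) m)"
    by (simp add: Zw_def incseqs_eq_UN_seqs_ending[OF assms] sum_UN_seqs_ending ending_sum_def)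
  moreover have "w = blockword ks"
    using Some by (rule blocks_eq_SomeD)
  ultimately show ?thesis
    by (simp add: word_seq_rev_blockword)
qed

section \<open>Cauchy convolution\<close>

definition conv :: "(nat \<Rightarrow> complex) \<Rightarrow> (nat \<Rightarrow> complex) \<Rightarrow> nat \<Rightarrow> complex" where
  "conv f g p = (\<Sum>i\<le>p. f i * g (p - i))"

lemma finite_pairs_sum_less: "finite {(j, n :: nat). j + n < p}"
  by (rule finite_subset[of _ "{..<p} \<times> {..<p}"]) auto

lemma conv_delta0_left: "conv delta0 g p = g p"
  by (simp add: conv_def delta0_def sum.atMost_shift)

lemma conv_delta0_right: "conv f delta0 p = f p"
proof -
  have "conv f delta0 p = (\<Sum>i\<le>p. if i = p then f i else 0)"
    unfolding conv_def delta0_def by (intro sum.cong) auto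
  then show ?thesis
    by simp
qed

lemma sum_conv: "(\<Sum>p'<p. conv f g p') = (\<Sum>(j, n)\<in>{(j, n). j + n < p}. f j * g n)"
proof -
  have "(\<Sum>p'<p. conv f g p') = (\<Sum>(p', i)\<in>Sigma {..<p} (\<lambda>p'. {..p'}). f i * g (p' - i))"
    unfolding conv_def by (subst sum.Sigma) auto
  also have "\<dots> = (\<Sum>(j, n)\<in>{(j, n). j + n < p}. f j * g n)"
    by (rule sum.reindex_bij_witness[where i = "\<lambda>(j, n). (j + n, j)"
          and j = "\<lambda>(p', i). (i, p' - i)"]) auto
  finally show ?thesis .
qed

lemma conv_partial_sum_left: "conv (\<lambda>m. \<Sum>m'<m. f m') g p = (\<Sum>p'<p. conv f g p')"
proof -
  have "conv (\<lambda>m. \<Sum>m'<m. f m') g p = (\<Sum>(i, m')\<in>Sigma {..p} (\<lambda>i. {..<i}). f m' * g (p - i))"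
    unfolding conv_def sum_distrib_right by (subst sum.Sigma[symmetric]) auto
  also have "\<dots> = (\<Sum>(j, n)\<in>{(j, n). j + n < p}. f j * g n)"
    by (rule sum.reindex_bij_witness[where i = "\<lambda>(j, n). (p - n, j)"
          and j = "\<lambda>(i, m'). (m', p - i)"]) auto
  finally show ?thesis
    by (simp add: sum_conv)
qed

lemma conv_partial_sum_right: "conv f (\<lambda>m. \<Sum>m'<m. g m') p = (\<Sum>p'<p. conv f g p')"
proof -
  have "conv f (\<lambda>m. \<Sum>m'<m. g m') p = (\<Sum>(i, n)\<in>Sigma {..p} (\<lambda>i. {..<p - i}). f i * g n)"
    unfolding conv_def sum_distrib_left by (subst sum.Sigma[symmetric]) auto
  also have "\<dots> = (\<Sum>(j, n)\<in>{(j, n). j + n < p}. f j * g n)"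
    by (rule sum.cong) auto
  finally show ?thesis
    by (simp add: sum_conv)
qed

lemma conv_sum_sum:
  "conv (\<lambda>i. \<Sum>a\<in>A. c a * f a i) (\<lambda>i. \<Sum>b\<in>B. d b * g b i) p
     = (\<Sum>a\<in>A. \<Sum>b\<in>B. c a * d b * conv (f a) (g b) p)"
proof -
  have "conv (\<lambda>i. \<Sum>a\<in>A. c a * f a i) (\<lambda>i. \<Sum>b\<in>B. d b * g b i) p
      = (\<Sum>i\<le>p. \<Sum>a\<in>A. \<Sum>b\<in>B. c a * d b * (f a i * g b (p - i)))"
    unfolding conv_def sum_product by (intro sum.cong refl) (simp add: mult_ac)
  also have "\<dots> = (\<Sum>a\<in>A. \<Sum>b\<in>B. \<Sum>i\<le>p. c a * d b * (f a i * g b (p - i)))"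
    by (subst sum.swap, rule sum.cong, rule refl, subst sum.swap, rule refl)
  also have "\<dots> = (\<Sum>a\<in>A. \<Sum>b\<in>B. c a * d b * conv (f a) (g b) p)"
    unfolding conv_def by (simp add: sum_distrib_left)
  finally show ?thesis .
qed

lemma conv_weighted:
  fixes w :: "nat \<Rightarrow> complex"
  assumes "f 0 = 0" "g 0 = 0"
    and w: "\<And>m n. m \<ge> 1 \<Longrightarrow> n \<ge> 1 \<Longrightarrow> w m * w n = w (m + n) * (w m + w n + c)"
  shows "conv (\<lambda>m. w m * f m) (\<lambda>m. w m * g m) p =
    w p * (conv (\<lambda>m. w m * f m) g p + conv f (\<lambda>m. w m * g m) p + c * conv f g p)"
proof -
  have "w i * f i * (w (p - i) * g (p - i))
      = w p * (w i * f i * g (p - i)) + w p * (f i * (w (p - i) * g (p - i)))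
        + w p * (c * (f i * g (p - i)))" if i: "i \<le> p" for i
  proof (cases "i = 0 \<or> i = p")
    case False
    with i have "i \<ge> 1" "p - i \<ge> 1"
      by auto
    with i have "w i * w (p - i) = w p * (w i + w (p - i) + c)"
      using w by fastforce
    then show ?thesis
      by (simp add: algebra_simps)
  qed (use assms(1,2) in auto)
  then show ?thesis
    unfolding conv_def by (simp add: sum.distrib sum_distrib_left distrib_left)
qed

lemma ratio_one_minus_mult:
  fixes a b c :: "'a::field"
  assumes "1 - a \<noteq> 0" "1 - b \<noteq> 0" "1 - a * b \<noteq> 0"
  shows "a * c / (1 - a) * (b * c / (1 - b))
    = a * b * c / (1 - a * b) * (a * c / (1 - a) + b * c / (1 - b) + c)"
proof -
  have "a * c / (1 - a) + b * c / (1 - b) + c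
      = (a * c * (1 - b) + b * c * (1 - a) + c * ((1 - a) * (1 - b))) / ((1 - a) * (1 - b))"
    using assms by (simp add: add_divide_distrib nonzero_divide_mult_cancel_right
        nonzero_divide_mult_cancel_left)
  also have "a * c * (1 - b) + b * c * (1 - a) + c * ((1 - a) * (1 - b)) = c * (1 - a * b)"
    by (simp add: algebra_simps)
  finally show ?thesis
    using assms by simp
qed

definition apply_elem :: "complex \<Rightarrow> H \<Rightarrow> (nat \<Rightarrow> complex) \<Rightarrow> nat \<Rightarrow> complex" where
  "apply_elem q h g m = lin_ext q (\<lambda>w. apply_word q g (rev w) m) h"

abbreviation Phi :: "complex \<Rightarrow> H \<Rightarrow> nat \<Rightarrow> complex" where
  "Phi q h \<equiv> apply_elem q h delta0"

lemma Phi_eq_sum: "Phi q h = (\<lambda>m. \<Sum>v\<in>keys h. evC q (lookup h v) * word_seq q (rev v) m)"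
  by (simp add: apply_elem_def lin_ext_def fun_eq_iff)

lemma Z_eq_sum_Phi: "1 \<le> M \<Longrightarrow> Z q M h = (\<Sum>m<M. Phi q h m)"
  unfolding Z_eq_lin_ext apply_elem_def
  by (simp add: Zw_eq_sum_word_seq lin_ext_sum_fun cong: lin_ext_cong)

lemma apply_elem_oneH: "apply_elem q oneH g = g"
  by (simp add: apply_elem_def oneH_def fun_eq_iff)

lemma apply_elem_cat: "apply_elem q (cat f h) g = apply_elem q h (apply_elem q f g)"
proof
  fix m
  have "apply_elem q (cat f h) g m = (\<Sum>v\<in>keys f. \<Sum>v'\<in>keys h.
      evC q (lookup f v) * evC q (lookup h v') * apply_word q (apply_word q g (rev v)) (rev v') m)"
    unfolding apply_elem_def lin_ext_cat by (simp add: apply_word_append)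
  also have "\<dots> = (\<Sum>v'\<in>keys h. evC q (lookup h v') *
      (\<Sum>v\<in>keys f. evC q (lookup f v) * apply_word q (apply_word q g (rev v)) (rev v') m))"
    by (subst sum.swap) (simp add: sum_distrib_left algebra_simps)
  also have "\<dots> = apply_elem q h (apply_elem q f g) m"
    unfolding apply_elem_def lin_ext_def by (simp add: apply_word_linear)
  finally show "apply_elem q (cat f h) g m = apply_elem q h (apply_elem q f g) m" .
qed

lemma apply_elem_prodH_snoc:
  "apply_elem q (prodH (us @ [u])) g = apply_elem q u (apply_elem q (prodH us) g)"
  by (induction us arbitrary: g) (simp_all add: prodH_Nil prodH_Cons apply_elem_cat apply_elem_oneH)

lemma apply_elem_Aset:
  assumes "a \<in> Aset"
  shows "apply_elem q a g m = F q m a * (\<Sum>m'<m. g m')"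
proof -
  obtain k where a: "a = CA_monomial [k]"
    using assms unfolding Aset_eq_range by blast
  have "F q m a = evC q (hbar ^ count_list [k] 0) * qphi q m ^ k"
    by (simp add: a CA_monomial_def F_eq_lin_ext Fw_def G_eq_qphi_power)
  moreover have "apply_elem q a g m
      = evC q (hbar ^ count_list [k] 0) * (qphi q m ^ k * (\<Sum>m'<m. g m'))"
    by (simp add: a CA_monomial_def apply_elem_def blockword_single apply_word_replicate_La)
  ultimately show ?thesis
    by simp
qed

lemma apply_elem_zspace: "u \<in> zspace \<Longrightarrow> apply_elem q u g m = F q m u * (\<Sum>m'<m. g m')"
proof (induction rule: zspace.induct)
  case z_zero
  then show ?case
    by (simp add: apply_elem_def F_eq_lin_ext)
next
  case (z_step a f c)
  then show ?case
    using apply_elem_Aset[OF z_step(1)]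
    by (simp add: apply_elem_def F_eq_lin_ext lin_ext_add lin_ext_scal algebra_simps)
qed

lemma Phi_prodH:
  "set us \<subseteq> zspace \<Longrightarrow> Phi q (prodH us) m = ending_sum (\<lambda>i m. F q m (us ! i)) (length us) m"
proof (induction us arbitrary: m rule: rev_induct)
  case Nil
  then show ?case
    by (simp add: prodH_Nil apply_elem_oneH ending_sum_0)
next
  case (snoc u us)
  then have "Phi q (prodH (us @ [u])) m = F q m u * (\<Sum>m'<m. Phi q (prodH us) m')"
    by (simp add: apply_elem_prodH_snoc apply_elem_zspace)
  with snoc show ?case
    using ending_sum_snoc[of "\<lambda>u m. F q m u" us u m] by simp
qed

section \<open>The shuffle product becomes convolution\<close>

locale q_disc =
  fixes q :: complex
  assumes norm_q_less_1: "norm q < 1"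
begin

lemma q_power_neq_1: "m \<ge> 1 \<Longrightarrow> q ^ m \<noteq> 1"
  using norm_q_less_1 power_less_one_iff[of "norm q" m] by (auto simp flip: norm_power)

lemma qphi_eq: "m \<ge> 1 \<Longrightarrow> qphi q m = q ^ m * (1 - q) / (1 - q ^ m)"
  using q_power_neq_1[of 1] by (simp add: qphi_def qint_def)

lemma qphi_mult:
  assumes "m \<ge> 1" "n \<ge> 1"
  shows "qphi q m * qphi q n = qphi q (m + n) * (qphi q m + qphi q n + (1 - q))"
proof -
  have "1 - q ^ m \<noteq> 0" "1 - q ^ n \<noteq> 0" "1 - q ^ m * q ^ n \<noteq> 0"
    using q_power_neq_1 assms by (auto simp flip: power_add)
  then have "qphi q m * qphi q n
      = q ^ m * q ^ n * (1 - q) / (1 - q ^ m * q ^ n) * (qphi q m + qphi q n + (1 - q))"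
    unfolding qphi_eq[OF assms(1)] qphi_eq[OF assms(2)] by (rule ratio_one_minus_mult)
  also have "q ^ m * q ^ n * (1 - q) / (1 - q ^ m * q ^ n) = qphi q (m + n)"
    using assms by (simp add: qphi_eq power_add)
  finally show ?thesis .
qed

lemma lin_ext_word_seq_mapkeys_Lb:
  "lin_ext q (\<lambda>w. word_seq q w p) (mapkeys (Cons Lb) h)
     = (\<Sum>m'<p. lin_ext q (\<lambda>w. word_seq q w m') h)"
  by (simp add: lin_ext_mapkeys lin_ext_sum_fun)

lemma lin_ext_word_seq_mapkeys_La:
  "lin_ext q (\<lambda>w. word_seq q w p) (mapkeys (Cons La) h)
     = qphi q p * lin_ext q (\<lambda>w. word_seq q w p) h"
  by (simp add: lin_ext_mapkeys lin_ext_mult_fun)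

theorem word_seq_shr:
  "rev_block x \<Longrightarrow> rev_block y \<Longrightarrow>
     lin_ext q (\<lambda>w. word_seq q w p) (shr x y) = conv (word_seq q x) (word_seq q y) p"
proof (induction x y arbitrary: p rule: shr.induct)
  case (1 y)
  then show ?case
    by (simp add: conv_delta0_left)
next
  case (2 v va)
  then show ?case
    by (simp add: conv_delta0_right)
next
  case (3 x v va)
  then show ?case
    by (simp add: lin_ext_word_seq_mapkeys_Lb conv_partial_sum_left)
next
  case (4 x y)
  then show ?case
    by (simp add: lin_ext_word_seq_mapkeys_Lb conv_partial_sum_right)
next
  case (5 x y)
  then have "x \<noteq> []" "y \<noteq> []" "rev_block x" "rev_block y"
    by auto
  with 5 show ?case
    using conv_weighted[of "word_seq q x" "word_seq q y" "qphi q" "1 - q" p] qphi_mult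
    by (simp add: lin_ext_word_seq_mapkeys_La lin_ext_add lin_ext_scal apply_word_at_0
        apply_word_La_fun del: apply_word.simps)
qed

lemma Phi_sh:
  assumes "f \<in> CA" "g \<in> CA"
  shows "Phi q (sh f g) p = conv (Phi q f) (Phi q g) p"
proof -
  let ?e = "\<lambda>w. word_seq q (rev w) p"
  have shw: "lin_ext q ?e (shw v v') = conv (word_seq q (rev v)) (word_seq q (rev v')) p"
    if "v \<in> keys f" "v' \<in> keys g" for v v'
  proof -
    have "rev_block (rev v)" "rev_block (rev v')"
      using that assms CA_keys_blockword by (auto simp: rev_block_iff)
    then show ?thesis
      by (simp add: shw_def lin_ext_mapkeys word_seq_shr)
  qed
  have "Phi q (sh f g) p = (\<Sum>v\<in>keys f. \<Sum>v'\<in>keys g.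
      evC q (lookup f v) * evC q (lookup g v') * lin_ext q ?e (shw v v'))"
    by (simp add: apply_elem_def lin_ext_sh)
  also have "\<dots> = (\<Sum>v\<in>keys f. \<Sum>v'\<in>keys g.
      evC q (lookup f v) * evC q (lookup g v') * conv (word_seq q (rev v)) (word_seq q (rev v')) p)"
    by (intro sum.cong refl) (simp add: shw)
  also have "\<dots> = conv (Phi q f) (Phi q g) p"
    by (simp only: Phi_eq_sum conv_sum_sum)
  finally show ?thesis .
qed

theorem Z_sh_prodH:
  assumes "set us \<subseteq> zspace" "set vs \<subseteq> zspace" "1 \<le> M"
  shows "Z q M (sh (prodH us) (prodH vs)) =
    (\<Sum>(ms, ns) \<in> {(ms, ns). length ms = length us \<and> length ns = length vs
         \<and> sorted_wrt (<) ms \<and> sorted_wrt (<) ns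
         \<and> (\<forall>x\<in>set ms. 0 < x) \<and> (\<forall>x\<in>set ns. 0 < x)
         \<and> lastz ms + lastz ns < M}.
       (\<Prod>i<length us. F q (ms ! i) (us ! i)) * (\<Prod>j<length vs. F q (ns ! j) (vs ! j)))"
    (is "_ = sum ?h ?S")
proof -
  let ?E = "\<lambda>(j, n). seqs_ending (length us) j \<times> seqs_ending (length vs) n"
  have "Z q M (sh (prodH us) (prodH vs)) = (\<Sum>p<M. conv (Phi q (prodH us)) (Phi q (prodH vs)) p)"
    using assms by (simp add: Z_eq_sum_Phi Phi_sh prodH_in_CA)
  also have "\<dots> = (\<Sum>jn\<in>{(j, n). j + n < M}. sum ?h (?E jn))"
    using assms unfolding sum_conv
    by (simp add: Phi_prodH ending_sum_def sum_product sum.cartesian_product split_def)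
  also have "\<dots> = sum ?h (\<Union>(?E ` {(j, n). j + n < M}))"
    by (rule sum.UNION_disjoint[symmetric])
      (auto simp: finite_pairs_sum_less finite_seqs_ending, auto simp: seqs_ending_def)
  also have "\<Union>(?E ` {(j, n). j + n < M}) = ?S"
    by (auto simp: seqs_ending_def)
  finally show ?thesis .
qed

end

section \<open>Convergence\<close>

lemma summable_poly_times_geometric:
  fixes r :: real
  assumes "0 \<le> r" "r < 1"
  shows "summable (\<lambda>m. (real m + 1) ^ n * r ^ m)"
proof (cases "r = 0")
  case True
  show ?thesis
    by (rule summable_ratio_test[of 0 0]) (auto simp: True)
next
  case False
  with assms have r: "0 < r" "r < 1"
    by simp_all
  define c where "c = (1 + r) / 2"
  have "(\<lambda>m. (1 + inverse (real (Suc m))) ^ n) \<longlonglongrightarrow> 1"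
    using tendsto_power[OF tendsto_add[OF tendsto_const LIMSEQ_inverse_real_of_nat], of 1 n] by simp
  moreover have "1 < c / r"
    using r by (simp add: c_def field_simps)
  ultimately have "eventually (\<lambda>m. (1 + inverse (real (Suc m))) ^ n < c / r) sequentially"
    by (rule order_tendstoD(2))
  then obtain N where N: "\<And>m. m \<ge> N \<Longrightarrow> (1 + inverse (real (Suc m))) ^ n < c / r"
    by (auto simp: eventually_sequentially)
  show ?thesis
  proof (rule summable_ratio_test)
    show "c < 1"
      using r by (simp add: c_def)
  next
    fix m
    assume "m \<ge> N"
    have "real (Suc m) + 1 = (1 + inverse (real (Suc m))) * (real m + 1)"
      by (simp add: field_simps)
    then have "norm ((real (Suc m) + 1) ^ n * r ^ Suc m)
        = (1 + inverse (real (Suc m))) ^ n * r * ((real m + 1) ^ n * r ^ m)"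
      using r by (simp add: power_mult_distrib abs_mult)
    also have "\<dots> \<le> (c / r) * r * ((real m + 1) ^ n * r ^ m)"
      using N[OF \<open>m \<ge> N\<close>] r by (intro mult_right_mono) auto
    finally show "norm ((real (Suc m) + 1) ^ n * r ^ Suc m) \<le> c * norm ((real m + 1) ^ n * r ^ m)"
      using r by simp
  qed
qed

context q_disc
begin

definition qphi_bound :: real where
  "qphi_bound = 2 / (1 - norm q)"

lemma qphi_bound_ge_1: "1 \<le> qphi_bound"
  using norm_q_less_1 by (simp add: qphi_bound_def field_simps)

lemma norm_qphi_le: "norm (qphi q m) \<le> qphi_bound * norm q ^ m"
proof (cases "m = 0")
  case False
  then have m: "m \<ge> 1"
    by simp
  have "norm (1 - q) \<le> 2"
    using norm_triangle_ineq4[of 1 q] norm_q_less_1 by simp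
  moreover have "norm q ^ m \<le> norm q"
    using power_decreasing[OF m, of "norm q"] norm_q_less_1 by simp
  then have "1 - norm q \<le> norm (1 - q ^ m)"
    using norm_triangle_ineq2[of 1 "q ^ m"] by (simp add: norm_power)
  moreover have "0 < 1 - norm q"
    using norm_q_less_1 by simp
  ultimately have "norm q ^ m * norm (1 - q) / norm (1 - q ^ m) \<le> norm q ^ m * 2 / (1 - norm q)"
    by (intro frac_le mult_left_mono) auto
  also have "\<dots> = qphi_bound * norm q ^ m"
    by (simp add: qphi_bound_def)
  finally show ?thesis
    by (simp add: qphi_eq[OF m] norm_mult norm_divide norm_power)
qed (use qphi_bound_ge_1 in simp)

lemma norm_qphi_le_qphi_bound: "norm (qphi q m) \<le> qphi_bound"
proof -
  have "qphi_bound * norm q ^ m \<le> qphi_bound"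
    using norm_q_less_1 qphi_bound_ge_1 by (simp add: mult_left_le power_le_one)
  then show ?thesis
    using norm_qphi_le[of m] by linarith
qed

lemma norm_word_seq_le: "norm (word_seq q x m) \<le> qphi_bound ^ length x * (real m + 1) ^ length x"
proof (induction x arbitrary: m)
  case (Cons a x)
  let ?n = "length x"
  have K0: "0 \<le> qphi_bound"
    using qphi_bound_ge_1 by simp
  show ?case
  proof (cases a)
    case La
    have "norm (word_seq q (La # x) m) \<le> qphi_bound * (qphi_bound ^ ?n * (real m + 1) ^ ?n)"
      using norm_qphi_le_qphi_bound Cons.IH K0 by (simp add: norm_mult mult_mono)
    also have "\<dots> \<le> qphi_bound * (qphi_bound ^ ?n * (real m + 1) ^ Suc ?n)"
      using K0 by (intro mult_left_mono) (auto intro!: power_increasing)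
    finally show ?thesis
      using La by (simp add: algebra_simps)
  next
    case Lb
    have "norm (word_seq q (Lb # x) m) \<le> (\<Sum>m'<m. qphi_bound ^ ?n * (real m + 1) ^ ?n)"
      unfolding apply_word.simps
    proof (intro sum_norm_le)
      fix m'
      assume "m' \<in> {..<m}"
      then have "(real m' + 1) ^ ?n \<le> (real m + 1) ^ ?n"
        by (intro power_mono) auto
      then show "norm (word_seq q x m') \<le> qphi_bound ^ ?n * (real m + 1) ^ ?n"
        using Cons.IH[of m'] K0 by (meson mult_left_mono order_trans zero_le_power)
    qed
    also have "\<dots> \<le> (qphi_bound * (real m + 1)) * (qphi_bound ^ ?n * (real m + 1) ^ ?n)"
    proof -
      have "real m \<le> 1 * (real m + 1)"
        by simp
      also have "\<dots> \<le> qphi_bound * (real m + 1)"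
        using qphi_bound_ge_1 by (intro mult_right_mono) auto
      finally show ?thesis
        using K0 by (simp add: mult_right_mono)
    qed
    finally show ?thesis
      using Lb by (simp add: algebra_simps)
  qed
qed (simp add: delta0_def)

text \<open>A last letter \<open>a\<close> contributes the geometric factor \<open>qphi\<close>.\<close>

lemma norm_word_seq_rev_le:
  assumes "w = [] \<or> last w = La"
  shows "norm (word_seq q (rev w) m)
    \<le> qphi_bound ^ Suc (length w) * ((real m + 1) ^ length w * norm q ^ m)"
proof (cases "w = []")
  case False
  with assms obtain w' where w: "w = w' @ [La]"
    by (cases w rule: rev_cases) auto
  let ?n = "length w'"
  have "norm (word_seq q (rev w) m)
      \<le> (qphi_bound * norm q ^ m) * (qphi_bound ^ ?n * (real m + 1) ^ ?n)"
    unfolding w using norm_qphi_le norm_word_seq_le[of "rev w'" m] qphi_bound_ge_1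
    by (simp add: norm_mult mult_mono)
  also have "\<dots> \<le> (qphi_bound * norm q ^ m) * (qphi_bound ^ Suc ?n * (real m + 1) ^ Suc ?n)"
    using qphi_bound_ge_1 by (intro mult_left_mono mult_mono power_increasing) auto
  finally show ?thesis
    by (simp add: w algebra_simps)
qed (use qphi_bound_ge_1 in \<open>simp add: delta0_def\<close>)

lemma summable_norm_Phi:
  assumes h: "h \<in> H0hat"
  shows "summable (\<lambda>m. norm (Phi q h m))"
proof (rule summable_comparison_test'[where N = 0])
  let ?bound = "\<lambda>w m. norm (evC q (lookup h w))
    * (qphi_bound ^ Suc (length w) * ((real m + 1) ^ length w * norm q ^ m))"
  show "summable (\<lambda>m. \<Sum>w\<in>keys h. ?bound w m)"
    using norm_q_less_1 by (intro summable_sum summable_mult summable_poly_times_geometric) auto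
  fix m
  have "norm (Phi q h m) \<le> (\<Sum>w\<in>keys h. norm (evC q (lookup h w) * word_seq q (rev w) m))"
    unfolding Phi_eq_sum by (rule norm_sum)
  also have "\<dots> \<le> (\<Sum>w\<in>keys h. ?bound w m)"
    using norm_word_seq_rev_le H0hat_keys_last[OF h]
    by (intro sum_mono) (simp add: norm_mult mult_left_mono)
  finally show "norm (norm (Phi q h m)) \<le> (\<Sum>w\<in>keys h. ?bound w m)"
    by simp
qed

lemma Z_tendsto_suminf_Phi: "h \<in> H0hat \<Longrightarrow> (\<lambda>M. Z q M h) \<longlonglongrightarrow> suminf (Phi q h)"
proof -
  assume "h \<in> H0hat"
  then have "(\<lambda>M. \<Sum>m<M. Phi q h m) \<longlonglongrightarrow> suminf (Phi q h)"
    using summable_LIMSEQ summable_norm_Phi summable_norm_cancel by blast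
  moreover have "eventually (\<lambda>M. (\<Sum>m<M. Phi q h m) = Z q M h) sequentially"
    using eventually_ge_at_top[of 1] by eventually_elim (simp add: Z_eq_sum_Phi)
  ultimately show ?thesis
    by (rule Lim_transform_eventually)
qed

lemma Zq_eq_suminf_Phi: "h \<in> H0hat \<Longrightarrow> Zq q h = suminf (Phi q h)"
  unfolding Zq_def using Z_tendsto_suminf_Phi by (blast intro: limI)

theorem Zq_sh:
  assumes w: "w \<in> H0hat" and w': "w' \<in> H0hat"
  shows "Zq q (sh w w') = Zq q w * Zq q w'"
proof -
  have "(\<lambda>p. conv (Phi q w) (Phi q w') p) sums (suminf (Phi q w) * suminf (Phi q w'))"
    unfolding conv_def
    by (rule Cauchy_product_sums[OF summable_norm_Phi[OF w] summable_norm_Phi[OF w']])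
  then have "(\<lambda>p. Phi q (sh w w') p) sums (Zq q w * Zq q w')"
    using w w' by (simp add: Phi_sh H0hat_subset_CA Zq_eq_suminf_Phi)
  moreover have "sh w w' \<in> H0hat"
    using w w' by (rule sh_in_H0hat)
  ultimately show ?thesis
    by (simp add: Zq_eq_suminf_Phi sums_iff)
qed

end

theorem proposition3p3:
  fixes q :: complex
  assumes "0 < norm q" and "norm q < 1"
  shows "(\<forall>f g. f \<in> CA \<longrightarrow> g \<in> CA \<longrightarrow> sh f g \<in> CA)
       \<and> (\<forall>f g. f \<in> H0hat \<longrightarrow> g \<in> H0hat \<longrightarrow> sh f g \<in> H0hat)
       \<and> (\<forall>us vs M. set us \<subseteq> zspace \<longrightarrow> set vs \<subseteq> zspace \<longrightarrow> 1 \<le> M \<longrightarrow>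
            Z q M (sh (prodH us) (prodH vs)) =
            (\<Sum>(ms, ns) \<in> {(ms, ns). length ms = length us \<and> length ns = length vs
                 \<and> sorted_wrt (<) ms \<and> sorted_wrt (<) ns
                 \<and> (\<forall>x\<in>set ms. 0 < x) \<and> (\<forall>x\<in>set ns. 0 < x)
                 \<and> lastz ms + lastz ns < M}.
               (\<Prod>i<length us. F q (ms ! i) (us ! i)) * (\<Prod>j<length vs. F q (ns ! j) (vs ! j))))
       \<and> (\<forall>w w'. w \<in> H0hat \<longrightarrow> w' \<in> H0hat \<longrightarrow> Zq q (sh w w') = Zq q w * Zq q w')"
proof -
  interpret q_disc q
    using assms(2) by unfold_locales
  show ?thesis
    using sh_in_CA sh_in_H0hat Z_sh_prodH Zq_sh by blast
qed

end
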